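(* Let $L:(0,\infty)\to(0,\infty)$ be slowly varying, and suppose there is $K>1$ such that $L$ is non-increasing and strictly less than $1$ on $[K,\infty)$. Then the condition $$-\int_K^\infty\frac{\log L(r)}{r(\log r)^2}\,dr<\infty$$ is equivalent to the following condition: for every $\delta>0$ there exists $K_1=K_1(\delta)>K$ such that for all $r>K_1$, $$\sum_{k=1}^\infty\frac{\log L(r^{2^k})}{2^k\log r}>-\delta,$$ and therefore $\prod_{k=1}^\infty [L(r^{2^k})]^{2^{-k}}>r^{-\delta}$.
   Context: A function $L$ is slowly varying if $L(cr)/L(r)\to1$ as $r\to\infty$ for every $c>0$. *)

theory Defs
  imports "HOL-Analysis.Analysis"
begin

definition slowly_varying :: "(real \<Rightarrow> real) \<Rightarrow> bool" where
  "slowly_varying L \<longleftrightarrow> (\<forall>c>0. ((\<lambda>r. L (c * r) / L r) \<longlongrightarrow> 1) at_top)"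

end

theory Submission
  imports Defs
begin

text \<open>Let g = -ln L, positive and non-decreasing on [K, \<infinity>). Since the integral of
  1/(x (ln x)^2) over [a, a^2) is 1/(2 ln a), the integral of g(x)/(x (ln x)^2) over the block
  [A k, A (k+1)), where A k = r^(2^(k+1)), lies between half the k-th term g(A k)/ln(A k) of the
  series at r and its (k+1)-st term. The blocks tile [r^2, \<infinity>), so the series at r is comparable
  to the tail of the integral beyond r^2, which becomes small for large r exactly when the
  integral is finite. The product is exp of ln r times the series.\<close>

lemma nn_integral_inverse_x_ln_squared:
  fixes a b :: real
  assumes "1 < a" "a \<le> b"
  shows "(\<integral>\<^sup>+x. ennreal (1 / (x * (ln x)\<^sup>2)) * indicator {a..<b} x \<partial>lborel)
           = ennreal (1 / ln a - 1 / ln b)"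
proof -
  have "(\<integral>\<^sup>+x. ennreal (1 / (x * (ln x)\<^sup>2)) * indicator {a..b} x \<partial>lborel)
          = ennreal (- 1 / ln b - (- 1 / ln a))"
  proof (rule nn_integral_FTC_Icc)
    fix x assume "x \<in> {a..b}"
    then have "1 < x" using assms by auto
    then show "((\<lambda>x. - 1 / ln x) has_real_derivative 1 / (x * (ln x)\<^sup>2)) (at x)"
      by (auto intro!: derivative_eq_intros simp: field_simps power2_eq_square)
    show "0 \<le> 1 / (x * (ln x)\<^sup>2)" using \<open>1 < x\<close> by simp
  qed (use assms in auto)
  moreover have "(\<integral>\<^sup>+x. ennreal (1 / (x * (ln x)\<^sup>2)) * indicator {a..<b} x \<partial>lborel)
      = (\<integral>\<^sup>+x. ennreal (1 / (x * (ln x)\<^sup>2)) * indicator {a..b} x \<partial>lborel)"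
    by (rule nn_integral_cong_AE)
      (use AE_lborel_singleton[of b] in \<open>eventually_elim, auto split: split_indicator\<close>)
  ultimately show ?thesis by simp
qed

lemma nn_integral_mult_bounded_factor:
  fixes g w :: "'a \<Rightarrow> real"
  assumes w: "(\<lambda>x. ennreal (w x) * indicator S x) \<in> borel_measurable M"
    and w_nonneg: "\<And>x. x \<in> S \<Longrightarrow> 0 \<le> w x"
    and bounds: "\<And>x. x \<in> S \<Longrightarrow> c \<le> g x \<and> g x \<le> C" and "0 \<le> c"
  shows "ennreal c * (\<integral>\<^sup>+x. ennreal (w x) * indicator S x \<partial>M)
           \<le> (\<integral>\<^sup>+x. ennreal (g x * w x) * indicator S x \<partial>M)"
    and "(\<integral>\<^sup>+x. ennreal (g x * w x) * indicator S x \<partial>M)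
           \<le> ennreal C * (\<integral>\<^sup>+x. ennreal (w x) * indicator S x \<partial>M)"
proof -
  have lower: "c * w x \<le> g x * w x" and upper: "g x * w x \<le> C * w x" if "x \<in> S" for x
    using bounds[OF that] w_nonneg[OF that] by (auto intro: mult_right_mono)
  have "0 \<le> g x" if "x \<in> S" for x
    using bounds[OF that] \<open>0 \<le> c\<close> by linarith
  then have "0 \<le> C" if "x \<in> S" for x
    using bounds[OF that] that by fastforce
  show "ennreal c * (\<integral>\<^sup>+x. ennreal (w x) * indicator S x \<partial>M)
          \<le> (\<integral>\<^sup>+x. ennreal (g x * w x) * indicator S x \<partial>M)"
    unfolding nn_integral_cmult[OF w, symmetric]
    by (intro nn_integral_mono)
      (use lower \<open>0 \<le> c\<close> w_nonneg
        in \<open>auto simp: ennreal_mult[symmetric] intro: ennreal_leI split: split_indicator\<close>)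
  show "(\<integral>\<^sup>+x. ennreal (g x * w x) * indicator S x \<partial>M)
          \<le> ennreal C * (\<integral>\<^sup>+x. ennreal (w x) * indicator S x \<partial>M)"
    unfolding nn_integral_cmult[OF w, symmetric]
    by (intro nn_integral_mono)
      (use upper \<open>\<And>x. x \<in> S \<Longrightarrow> 0 \<le> C\<close> w_nonneg
        in \<open>auto simp: ennreal_mult[symmetric] intro: ennreal_leI split: split_indicator\<close>)
qed

lemma UN_atLeastLessThan_incseq:
  fixes s :: "nat \<Rightarrow> 'a :: linorder"
  assumes "incseq s" and unbounded: "\<And>x. \<exists>k. x < s k"
  shows "(\<Union>k. {s k..<s (Suc k)}) = {s 0..}"
proof
  show "(\<Union>k. {s k..<s (Suc k)}) \<subseteq> {s 0..}"
    by (auto intro: order_trans[OF incseqD[OF \<open>incseq s\<close>, of 0]])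
  show "{s 0..} \<subseteq> (\<Union>k. {s k..<s (Suc k)})"
  proof
    fix x assume x: "x \<in> {s 0..}"
    define n where "n = (LEAST n. x < s n)"
    have "x < s n" unfolding n_def using unbounded by (rule LeastI_ex)
    with x obtain k where k: "n = Suc k" by (cases n) auto
    have "\<not> x < s k" using not_less_Least[of k "\<lambda>n. x < s n"] k unfolding n_def by simp
    with \<open>x < s n\<close> k show "x \<in> (\<Union>k. {s k..<s (Suc k)})" by (auto simp: not_less)
  qed
qed

lemma disjoint_family_atLeastLessThan_incseq:
  fixes s :: "nat \<Rightarrow> 'a :: linorder"
  assumes "incseq s"
  shows "disjoint_family (\<lambda>k. {s k..<s (Suc k)})"
  unfolding disjoint_family_on_def
proof (intro ballI impI)
  fix m n :: nat assume "m \<noteq> n"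
  then have "Suc m \<le> n \<or> Suc n \<le> m" by auto
  then show "{s m..<s (Suc m)} \<inter> {s n..<s (Suc n)} = {}"
    using incseqD[OF assms, of "Suc m" n] incseqD[OF assms, of "Suc n" m] by auto
qed

lemma nn_integral_atLeast_eq_suminf_blocks:
  fixes s :: "nat \<Rightarrow> real"
  assumes "incseq s" "\<And>x. \<exists>k. x < s k" and [measurable]: "f \<in> borel_measurable borel"
  shows "(\<integral>\<^sup>+x. f x * indicator {s 0..} x \<partial>lborel)
           = (\<Sum>k. \<integral>\<^sup>+x. f x * indicator {s k..<s (Suc k)} x \<partial>lborel)"
proof -
  have "(\<lambda>x. f x * indicator {s 0..} x) = (\<lambda>x. \<Sum>k. f x * indicator {s k..<s (Suc k)} x)"
    by (simp add: ennreal_suminf_cmult suminf_indicator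
        disjoint_family_atLeastLessThan_incseq UN_atLeastLessThan_incseq assms)
  then show ?thesis
    by (simp only:) (rule nn_integral_suminf, measurable)
qed

lemma nn_integral_atLeast_eventually_small:
  fixes f :: "real \<Rightarrow> ennreal"
  assumes [measurable]: "f \<in> borel_measurable borel"
    and finite: "(\<integral>\<^sup>+x. f x \<partial>lborel) < \<infinity>" and "0 < e"
  shows "\<exists>N. (\<integral>\<^sup>+x. f x * indicator {N..} x \<partial>lborel) < e"
proof -
  define F where "F = (\<lambda>n x. f x * indicator {real n..} x)"
  have "(\<integral>\<^sup>+x. f x * indicator {0..} x \<partial>lborel) \<le> (\<integral>\<^sup>+x. f x \<partial>lborel)"
    by (rule nn_integral_mono) (simp add: indicator_def)
  with finite have F0_finite: "(\<integral>\<^sup>+x. f x * indicator {0..} x \<partial>lborel) < \<infinity>" by simp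
  have "(\<integral>\<^sup>+x. (INF n. F n x) \<partial>lborel) = (INF n. integral\<^sup>N lborel (F n))"
    by (rule nn_integral_monotone_convergence_INF_AE')
      (use F0_finite in \<open>auto simp: F_def split: split_indicator intro!: AE_I2\<close>)
  moreover have "(INF n. F n x) = 0" for x
  proof -
    have "F (nat \<lceil>x\<rceil> + 1) x = 0"
      unfolding F_def by (auto split: split_indicator) linarith
    then show ?thesis by (metis INF_lower2 UNIV_I le_zero_eq order_refl)
  qed
  ultimately have "(INF n. integral\<^sup>N lborel (F n)) < e" using \<open>0 < e\<close> by simp
  then show ?thesis by (auto simp: INF_less_iff F_def)
qed

lemma summable_if_ennreal_suminf_less:
  fixes u :: "nat \<Rightarrow> real"
  assumes nonneg: "\<And>k. 0 \<le> u k" and less: "(\<Sum>k. ennreal (u k)) < ennreal e"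
  shows "summable u" and "suminf u < e"
proof -
  show "summable u"
    by (rule summable_suminf_not_top) (use nonneg less in auto)
  then have "ennreal (suminf u) < ennreal e"
    using less suminf_ennreal2[OF nonneg] by simp
  then show "suminf u < e"
    using suminf_nonneg[OF \<open>summable u\<close> nonneg] by (simp add: ennreal_less_iff)
qed

lemma convergent_prod_powr_gt_powr:
  fixes a c :: "nat \<Rightarrow> real"
  assumes "1 < r" "\<And>k. 0 < a k"
    and summable: "summable (\<lambda>k. ln (a k) / (c k * ln r))"
    and gt: "(\<Sum>k. ln (a k) / (c k * ln r)) > - \<delta>"
  shows "convergent_prod (\<lambda>k. a k powr (1 / c k))"
    and "(\<Prod>k. a k powr (1 / c k)) > r powr (- \<delta>)"
proof -
  let ?s = "\<lambda>k. ln (a k) / (c k * ln r)"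
  have "0 < ln r" using \<open>1 < r\<close> by simp
  have "a k \<noteq> 0" for k
    using assms(2)[of k] by simp
  then have as_exp: "(\<lambda>k. a k powr (1 / c k)) = (\<lambda>k. exp (ln r * ?s k))"
    using \<open>0 < ln r\<close> by (simp add: powr_def)
  have summable': "summable (\<lambda>k. ln r * ?s k)"
    using summable_mult[OF summable] .
  show "convergent_prod (\<lambda>k. a k powr (1 / c k))"
    unfolding as_exp by (rule convergent_prod_exp[OF summable'])
  have "ln r * (- \<delta>) < ln r * (\<Sum>k. ?s k)"
    using mult_strict_left_mono[OF gt \<open>0 < ln r\<close>] .
  then show "(\<Prod>k. a k powr (1 / c k)) > r powr (- \<delta>)"
    unfolding as_exp prodinf_exp[OF summable'] suminf_mult[OF summable]
    using \<open>1 < r\<close> by (simp add: powr_def mult.commute)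
qed

locale noninc_tail_below_one =
  fixes L :: "real \<Rightarrow> real" and K :: real
  assumes pos: "\<And>r. r > 0 \<Longrightarrow> L r > 0"
    and K_gt_1: "K > 1"
    and noninc: "\<And>x y. K \<le> x \<Longrightarrow> x \<le> y \<Longrightarrow> L y \<le> L x"
    and less_1: "\<And>r. K \<le> r \<Longrightarrow> L r < 1"
begin

definition g :: "real \<Rightarrow> real" where "g x = - ln (L x)"

definition h :: "real \<Rightarrow> real" where "h x = g x / (x * (ln x)\<^sup>2)"

definition dyadic_term :: "real \<Rightarrow> nat \<Rightarrow> real"
  where "dyadic_term r k = g (r ^ 2 ^ Suc k) / (2 ^ Suc k * ln r)"

lemma g_pos: "K \<le> x \<Longrightarrow> 0 < g x"
  using pos[of x] less_1[of x] K_gt_1 by (simp add: g_def ln_less_zero)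

lemma g_mono: "K \<le> x \<Longrightarrow> x \<le> y \<Longrightarrow> g x \<le> g y"
  using pos[of x] pos[of y] noninc[of x y] K_gt_1 by (simp add: g_def)

lemma series_term_eq: "ln (L (r ^ 2 ^ Suc k)) / (2 ^ Suc k * ln r) = - dyadic_term r k"
  by (simp add: dyadic_term_def g_def)

lemma borel_measurable_h_indicator:
  assumes "S \<in> sets borel" "S \<subseteq> {K..}"
  shows "(\<lambda>x. ennreal (h x) * indicator S x) \<in> borel_measurable borel"
proof -
  \<comment> \<open>\<open>g\<close> is monotone only on \<open>[K, \<infinity>)\<close>, so extend it constantly to the left.\<close>
  define g' where "g' x = g (max K x)" for x
  have "mono g'" by (auto simp: mono_def g'_def intro!: g_mono)
  then have [measurable]: "g' \<in> borel_measurable borel" by (rule borel_measurable_mono)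
  have "(\<lambda>x. ennreal (g' x / (x * (ln x)\<^sup>2)) * indicator S x) \<in> borel_measurable borel"
    using assms(1) by measurable
  moreover have "ennreal (h x) * indicator S x = ennreal (g' x / (x * (ln x)\<^sup>2)) * indicator S x" for x
    using assms(2) by (auto simp: h_def g'_def max_def split: split_indicator)
  ultimately show ?thesis by simp
qed

lemma nn_integral_h_bounds:
  assumes "K \<le> a" "a \<le> b" "\<And>x. x \<in> {a..<b} \<Longrightarrow> c \<le> g x \<and> g x \<le> C" "0 \<le> c"
  shows "ennreal c * ennreal (1 / ln a - 1 / ln b) \<le> (\<integral>\<^sup>+x. ennreal (h x) * indicator {a..<b} x \<partial>lborel)"
    and "(\<integral>\<^sup>+x. ennreal (h x) * indicator {a..<b} x \<partial>lborel) \<le> ennreal C * ennreal (1 / ln a - 1 / ln b)"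
  using nn_integral_mult_bounded_factor[of "\<lambda>x. 1 / (x * (ln x)\<^sup>2)" "{a..<b}" lborel c g C]
    nn_integral_inverse_x_ln_squared[of a b] assms K_gt_1
  by (auto simp: h_def)

lemma nn_integral_h_square_block:
  assumes "K \<le> a"
  shows "ennreal (g a / (2 * ln a)) \<le> (\<integral>\<^sup>+x. ennreal (h x) * indicator {a..<a\<^sup>2} x \<partial>lborel)"
    and "(\<integral>\<^sup>+x. ennreal (h x) * indicator {a..<a\<^sup>2} x \<partial>lborel) \<le> ennreal (g (a\<^sup>2) / (2 * ln a))"
proof -
  have "1 < a" using assms K_gt_1 by simp
  then have "a \<le> a\<^sup>2" and "0 < ln a" by (simp_all add: power2_eq_square)
  then have weight: "1 / ln a - 1 / ln (a\<^sup>2) = 1 / (2 * ln a)"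
    by (simp add: ln_realpow field_simps)
  have bounds: "g a \<le> g x \<and> g x \<le> g (a\<^sup>2)" if "x \<in> {a..<a\<^sup>2}" for x
    using that assms g_mono by auto
  show "ennreal (g a / (2 * ln a)) \<le> (\<integral>\<^sup>+x. ennreal (h x) * indicator {a..<a\<^sup>2} x \<partial>lborel)"
    using nn_integral_h_bounds(1)[OF assms \<open>a \<le> a\<^sup>2\<close> bounds] g_pos[OF assms] \<open>0 < ln a\<close>
    by (simp add: weight ennreal_mult[symmetric])
  show "(\<integral>\<^sup>+x. ennreal (h x) * indicator {a..<a\<^sup>2} x \<partial>lborel) \<le> ennreal (g (a\<^sup>2) / (2 * ln a))"
    using nn_integral_h_bounds(2)[OF assms \<open>a \<le> a\<^sup>2\<close> bounds] g_pos[OF assms] g_pos[of "a\<^sup>2"]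
      assms \<open>a \<le> a\<^sup>2\<close> \<open>0 < ln a\<close>
    by (simp add: weight ennreal_mult[symmetric])
qed

context
  fixes r :: real
  assumes "K \<le> r"
begin

private definition A :: "nat \<Rightarrow> real" where "A k = r ^ 2 ^ Suc k"

private lemma A_Suc: "A (Suc k) = (A k)\<^sup>2"
  by (simp add: A_def power_mult[symmetric] mult.commute)

private lemma ln_A: "ln (A k) = 2 ^ Suc k * ln r"
  using \<open>K \<le> r\<close> K_gt_1 by (simp add: A_def ln_realpow)

private lemma K_le_A: "K \<le> A k"
  using \<open>K \<le> r\<close> K_gt_1 power_increasing[of 1 "2 ^ Suc k" r] by (simp add: A_def)

private lemma dyadic_term_A: "dyadic_term r k = g (A k) / ln (A k)"
  using ln_A[of k] by (simp add: dyadic_term_def A_def)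

lemma dyadic_term_nonneg: "0 \<le> dyadic_term r k"
  using g_pos[OF K_le_A[of k]] K_le_A[of k] K_gt_1 by (simp add: dyadic_term_A)

private lemma nn_integral_h_block:
  "ennreal (dyadic_term r k / 2) \<le> (\<integral>\<^sup>+x. ennreal (h x) * indicator {A k..<A (Suc k)} x \<partial>lborel)"
  "(\<integral>\<^sup>+x. ennreal (h x) * indicator {A k..<A (Suc k)} x \<partial>lborel) \<le> ennreal (dyadic_term r (Suc k))"
proof -
  have "ln (A (Suc k)) = 2 * ln (A k)" by (simp add: ln_A)
  then show "ennreal (dyadic_term r k / 2) \<le> (\<integral>\<^sup>+x. ennreal (h x) * indicator {A k..<A (Suc k)} x \<partial>lborel)"
    and "(\<integral>\<^sup>+x. ennreal (h x) * indicator {A k..<A (Suc k)} x \<partial>lborel) \<le> ennreal (dyadic_term r (Suc k))"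
    using nn_integral_h_square_block[OF K_le_A[of k]]
    by (simp_all add: dyadic_term_A A_Suc mult.commute)
qed

private lemma nn_integral_h_eq_suminf_blocks:
  "(\<integral>\<^sup>+x. ennreal (h x) * indicator {r\<^sup>2..} x \<partial>lborel)
     = (\<Sum>k. \<integral>\<^sup>+x. ennreal (h x) * indicator {A k..<A (Suc k)} x \<partial>lborel)"
proof -
  have "1 < r" using \<open>K \<le> r\<close> K_gt_1 by simp
  have "incseq A"
    using \<open>1 < r\<close> by (intro incseq_SucI) (simp add: A_def power_increasing)
  moreover have "\<exists>k. x < A k" for x
  proof -
    obtain k where "x < r ^ k" using real_arch_pow[OF \<open>1 < r\<close>] by blast
    moreover have "k \<le> 2 ^ Suc k" using less_exp[of "Suc k"] by simp
    then have "r ^ k \<le> A k"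
      using \<open>1 < r\<close> by (simp add: A_def power_increasing)
    ultimately show ?thesis by (meson less_le_trans)
  qed
  moreover have "(\<lambda>x. ennreal (h x) * indicator {r\<^sup>2..} x) = (\<lambda>x. ennreal (h x) * indicator {K..} x * indicator {A 0..} x)"
    using K_le_A[of 0] by (auto simp: A_def power2_eq_square split: split_indicator)
  moreover have "ennreal (h x) * indicator {K..} x * indicator {A k..<A (Suc k)} x
      = ennreal (h x) * indicator {A k..<A (Suc k)} x" for x k
    using K_le_A[of k] by (auto split: split_indicator)
  ultimately show ?thesis
    using nn_integral_atLeast_eq_suminf_blocks[of A "\<lambda>x. ennreal (h x) * indicator {K..} x"]
      borel_measurable_h_indicator[of "{K..}"]
    by simp
qed

lemma suminf_dyadic_term_le_nn_integral:
  "(\<Sum>k. ennreal (dyadic_term r k / 2)) \<le> (\<integral>\<^sup>+x. ennreal (h x) * indicator {r\<^sup>2..} x \<partial>lborel)"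
  unfolding nn_integral_h_eq_suminf_blocks by (intro suminf_le nn_integral_h_block) auto

lemma nn_integral_le_suminf_dyadic_term:
  "(\<integral>\<^sup>+x. ennreal (h x) * indicator {r\<^sup>2..} x \<partial>lborel) \<le> (\<Sum>k. ennreal (dyadic_term r (Suc k)))"
  unfolding nn_integral_h_eq_suminf_blocks by (intro suminf_le nn_integral_h_block) auto

end

lemma dyadic_series_eventually_small:
  assumes finite: "(\<integral>\<^sup>+x. ennreal (h x) * indicator {K..} x \<partial>lborel) < \<infinity>" and "0 < \<delta>"
  shows "\<exists>K\<^sub>1>K. \<forall>r>K\<^sub>1. summable (dyadic_term r) \<and> suminf (dyadic_term r) < \<delta>"
proof -
  obtain N where N: "(\<integral>\<^sup>+x. ennreal (h x) * indicator {K..} x * indicator {N..} x \<partial>lborel) < ennreal (\<delta> / 2)"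
    using nn_integral_atLeast_eventually_small[OF borel_measurable_h_indicator finite, of "ennreal (\<delta> / 2)"]
      \<open>0 < \<delta>\<close> by auto
  have "summable (dyadic_term r) \<and> suminf (dyadic_term r) < \<delta>" if "max K N + 1 < r" for r
  proof -
    have "K \<le> r" "N \<le> r" using that max.cobounded1[of K N] max.cobounded2[of K N] by linarith+
    then have "r \<le> r\<^sup>2" using K_gt_1 by (intro self_le_power) simp_all
    have "(\<Sum>k. ennreal (dyadic_term r k / 2)) \<le> (\<integral>\<^sup>+x. ennreal (h x) * indicator {r\<^sup>2..} x \<partial>lborel)"
      by (rule suminf_dyadic_term_le_nn_integral[OF \<open>K \<le> r\<close>])
    also have "\<dots> \<le> (\<integral>\<^sup>+x. ennreal (h x) * indicator {K..} x * indicator {N..} x \<partial>lborel)"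
      using \<open>K \<le> r\<close> \<open>N \<le> r\<close> \<open>r \<le> r\<^sup>2\<close>
      by (intro nn_integral_mono) (simp split: split_indicator)
    also note N
    finally have less: "(\<Sum>k. ennreal (dyadic_term r k / 2)) < ennreal (\<delta> / 2)" .
    have nonneg: "0 \<le> dyadic_term r k / 2" for k
      using dyadic_term_nonneg[OF \<open>K \<le> r\<close>] by simp
    note summable_if_ennreal_suminf_less[OF nonneg less]
    then show ?thesis by (simp add: summable_divide_iff suminf_divide)
  qed
  then show ?thesis by (intro exI[of _ "max K N + 1"]) auto
qed

lemma nn_integral_h_finite_if_summable:
  assumes "K \<le> r" "summable (dyadic_term r)"
  shows "(\<integral>\<^sup>+x. ennreal (h x) * indicator {K..} x \<partial>lborel) < \<infinity>"
proof -
  have "K \<le> r\<^sup>2" using assms K_gt_1 self_le_power[of r 2] by simp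
  have "(\<integral>\<^sup>+x. ennreal (h x) * indicator {K..} x \<partial>lborel)
      = (\<integral>\<^sup>+x. ennreal (h x) * indicator {K..<r\<^sup>2} x + ennreal (h x) * indicator {r\<^sup>2..} x \<partial>lborel)"
    using \<open>K \<le> r\<^sup>2\<close> by (intro nn_integral_cong) (auto split: split_indicator)
  also have "\<dots> = (\<integral>\<^sup>+x. ennreal (h x) * indicator {K..<r\<^sup>2} x \<partial>lborel)
      + (\<integral>\<^sup>+x. ennreal (h x) * indicator {r\<^sup>2..} x \<partial>lborel)"
    using \<open>K \<le> r\<^sup>2\<close> by (intro nn_integral_add) (auto intro: borel_measurable_h_indicator)
  finally have split: "(\<integral>\<^sup>+x. ennreal (h x) * indicator {K..} x \<partial>lborel)
      = (\<integral>\<^sup>+x. ennreal (h x) * indicator {K..<r\<^sup>2} x \<partial>lborel)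
      + (\<integral>\<^sup>+x. ennreal (h x) * indicator {r\<^sup>2..} x \<partial>lborel)" .
  have "0 \<le> g x \<and> g x \<le> g (r\<^sup>2)" if "x \<in> {K..<r\<^sup>2}" for x
    using that g_pos[of x] g_mono[of x "r\<^sup>2"] by (simp add: less_imp_le)
  then have "(\<integral>\<^sup>+x. ennreal (h x) * indicator {K..<r\<^sup>2} x \<partial>lborel)
      \<le> ennreal (g (r\<^sup>2)) * ennreal (1 / ln K - 1 / ln (r\<^sup>2))"
    using nn_integral_h_bounds(2)[OF order_refl \<open>K \<le> r\<^sup>2\<close>] by blast
  also have "\<dots> < \<infinity>" by (simp add: ennreal_mult_less_top)
  finally have initial: "(\<integral>\<^sup>+x. ennreal (h x) * indicator {K..<r\<^sup>2} x \<partial>lborel) < \<infinity>" .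
  have "(\<integral>\<^sup>+x. ennreal (h x) * indicator {r\<^sup>2..} x \<partial>lborel) \<le> (\<Sum>k. ennreal (dyadic_term r (Suc k)))"
    by (rule nn_integral_le_suminf_dyadic_term[OF \<open>K \<le> r\<close>])
  also have "\<dots> = ennreal (\<Sum>k. dyadic_term r (Suc k))"
    using assms(2) dyadic_term_nonneg[OF \<open>K \<le> r\<close>] by (intro suminf_ennreal2) (auto simp: summable_Suc_iff)
  also have "\<dots> < \<infinity>" by simp
  finally have tail: "(\<integral>\<^sup>+x. ennreal (h x) * indicator {r\<^sup>2..} x \<partial>lborel) < \<infinity>" .
  show ?thesis
    unfolding split using initial tail by simp
qed

lemma nn_integral_h_finite_iff_dyadic_series_small:
  "(\<integral>\<^sup>+x. ennreal (h x) * indicator {K..} x \<partial>lborel) < \<infinity>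
     \<longleftrightarrow> (\<forall>\<delta>>0. \<exists>K\<^sub>1>K. \<forall>r>K\<^sub>1. summable (dyadic_term r) \<and> suminf (dyadic_term r) < \<delta>)"
proof
  assume "\<forall>\<delta>>0. \<exists>K\<^sub>1>K. \<forall>r>K\<^sub>1. summable (dyadic_term r) \<and> suminf (dyadic_term r) < \<delta>"
  then obtain K\<^sub>1 where "K\<^sub>1 > K" "summable (dyadic_term (K\<^sub>1 + 1))"
    by (metis less_add_one zero_less_one)
  then show "(\<integral>\<^sup>+x. ennreal (h x) * indicator {K..} x \<partial>lborel) < \<infinity>"
    by (intro nn_integral_h_finite_if_summable[of "K\<^sub>1 + 1"]) auto
qed (use dyadic_series_eventually_small in blast)

lemma dyadic_series_condition_iff:
  "(summable (\<lambda>k. ln (L (r ^ 2 ^ Suc k)) / (2 ^ Suc k * ln r))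
      \<and> (\<Sum>k. ln (L (r ^ 2 ^ Suc k)) / (2 ^ Suc k * ln r)) > - \<delta>)
   \<longleftrightarrow> summable (dyadic_term r) \<and> suminf (dyadic_term r) < \<delta>"
  unfolding series_term_eq by (auto simp: summable_minus_iff suminf_minus)

lemma dyadic_product_eventually_gt_powr:
  assumes "\<exists>K\<^sub>1>K. \<forall>r>K\<^sub>1. summable (dyadic_term r) \<and> suminf (dyadic_term r) < \<delta>"
  shows "\<exists>K\<^sub>1>K. \<forall>r>K\<^sub>1. convergent_prod (\<lambda>k. L (r ^ 2 ^ Suc k) powr (1 / 2 ^ Suc k))
           \<and> (\<Prod>k. L (r ^ 2 ^ Suc k) powr (1 / 2 ^ Suc k)) > r powr (- \<delta>)"
proof -
  obtain K\<^sub>1 where "K < K\<^sub>1" and series: "\<And>r. K\<^sub>1 < r \<Longrightarrow> summable (dyadic_term r) \<and> suminf (dyadic_term r) < \<delta>"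
    using assms by blast
  have "convergent_prod (\<lambda>k. L (r ^ 2 ^ Suc k) powr (1 / 2 ^ Suc k))
      \<and> (\<Prod>k. L (r ^ 2 ^ Suc k) powr (1 / 2 ^ Suc k)) > r powr (- \<delta>)" if "K\<^sub>1 < r" for r
  proof -
    have "1 < r" using that \<open>K < K\<^sub>1\<close> K_gt_1 by simp
    then show ?thesis
      using convergent_prod_powr_gt_powr[of r "\<lambda>k. L (r ^ 2 ^ Suc k)" "\<lambda>k. 2 ^ Suc k" \<delta>]
        series[OF that] dyadic_series_condition_iff[of r \<delta>] pos
      by simp
  qed
  with \<open>K < K\<^sub>1\<close> show ?thesis by blast
qed

end

theorem lemma3p4:
  fixes L :: "real \<Rightarrow> real" and K :: real
  assumes pos: "\<And>r. r > 0 \<Longrightarrow> L r > 0"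
    and sv: "slowly_varying L"
    and K1: "K > 1"
    and noninc: "\<And>x y. K \<le> x \<Longrightarrow> x \<le> y \<Longrightarrow> L y \<le> L x"
    and lt1: "\<And>r. K \<le> r \<Longrightarrow> L r < 1"
  shows "((\<integral>\<^sup>+ r \<in> {K..}. ennreal (- ln (L r) / (r * (ln r)\<^sup>2)) \<partial>lborel) < \<infinity>
          \<longleftrightarrow>
          (\<forall>\<delta>>0. \<exists>K\<^sub>1>K. \<forall>r>K\<^sub>1.
              summable (\<lambda>k. ln (L (r ^ (2 ^ Suc k))) / (2 ^ Suc k * ln r)) \<and>
              (\<Sum>k. ln (L (r ^ (2 ^ Suc k))) / (2 ^ Suc k * ln r)) > - \<delta>))
     \<and> ((\<forall>\<delta>>0. \<exists>K\<^sub>1>K. \<forall>r>K\<^sub>1.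
              summable (\<lambda>k. ln (L (r ^ (2 ^ Suc k))) / (2 ^ Suc k * ln r)) \<and>
              (\<Sum>k. ln (L (r ^ (2 ^ Suc k))) / (2 ^ Suc k * ln r)) > - \<delta>)
        \<longrightarrow> (\<forall>\<delta>>0. \<exists>K\<^sub>1>K. \<forall>r>K\<^sub>1.
              convergent_prod (\<lambda>k. L (r ^ (2 ^ Suc k)) powr (1 / 2 ^ Suc k)) \<and>
              (\<Prod>k. L (r ^ (2 ^ Suc k)) powr (1 / 2 ^ Suc k)) > r powr (- \<delta>)))"
proof -
  interpret noninc_tail_below_one L K
    using pos K1 noninc lt1 by unfold_locales
  have integral_eq: "(\<integral>\<^sup>+ r \<in> {K..}. ennreal (- ln (L r) / (r * (ln r)\<^sup>2)) \<partial>lborel)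
      = (\<integral>\<^sup>+x. ennreal (h x) * indicator {K..} x \<partial>lborel)"
    by (simp add: h_def g_def)
  show ?thesis
    unfolding integral_eq dyadic_series_condition_iff nn_integral_h_finite_iff_dyadic_series_small
    using dyadic_product_eventually_gt_powr by blast
qed

end
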